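(* Let $X$ be a linear topological space, $\mathbf{S}$ a family of seminorms on $X$ separating points of $X$, and $\tau$ the topology on $X$ generated by $\mathbf{S}$. Let $Y\subseteq X$ be compact in $\tau$, and let $f:Y\to Y$ be continuous with respect to $\tau$ and such that $\lim_{n\to\infty}\mathbf{s}(f^n(x)-f^n(y))=0$ for each $\mathbf{s}\in\mathbf{S}$ and each $x,y\in Y$. Then $f$ has a unique fixed point in $Y$.
   Context: The topology generated by a family of seminorms $\mathbf{S}$ has as base the sets $\{z\in X:\mathbf{s}_i(x-z)<\delta,\ i=1,\dots,k\}$ for $x\in X$, finitely many $\mathbf{s}_1,\dots,\mathbf{s}_k\in\mathbf{S}$, and $\delta>0$. $f^n$ denotes the $n$-fold iterate of $f$. *)

theory Defs
  imports "HOL-Analysis.Analysis"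
begin

definition is_seminorm :: "('a::real_vector \<Rightarrow> real) \<Rightarrow> bool" where
  "is_seminorm p \<longleftrightarrow> (\<forall>x y. p (x + y) \<le> p x + p y) \<and> (\<forall>c x. p (c *\<^sub>R x) = \<bar>c\<bar> * p x)"

definition separates_points :: "('a::real_vector \<Rightarrow> real) set \<Rightarrow> bool" where
  "separates_points S \<longleftrightarrow> (\<forall>x y. x \<noteq> y \<longrightarrow> (\<exists>s\<in>S. s (x - y) \<noteq> 0))"

definition seminorm_topology :: "('a::real_vector \<Rightarrow> real) set \<Rightarrow> 'a topology" where
  "seminorm_topology S = topology_generated_by
     {{z. \<forall>s\<in>F. s (x - z) < \<delta>} | x F \<delta>. finite F \<and> F \<subseteq> S \<and> \<delta> > 0}"

end

theory Submission
  imports Defs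
begin

text \<open>Choose a cluster point \<open>p\<close> of an orbit \<open>x\<^sub>n = f\<^sup>n x\<^sub>0\<close>; it exists by compactness. For every
  seminorm \<open>s\<close> in the family the orbit is asymptotically regular, \<open>s(x\<^sub>n - x\<^sub>n\<^sub>+\<^sub>1) \<rightarrow> 0\<close>, so
  infinitely many \<open>x\<^sub>n\<close> lie close to \<open>p\<close> while \<open>x\<^sub>n\<^sub>+\<^sub>1 = f x\<^sub>n\<close> lies close both to \<open>x\<^sub>n\<close> and, by
  continuity, to \<open>f p\<close>. Hence \<open>s(p - f p) = 0\<close> for all \<open>s\<close>, and \<open>p = f p\<close> as the family separates
  points. Two fixed points have constant orbits, so the hypothesis forces their distance to vanish.\<close>

lemma seminorm_zero:
  assumes "is_seminorm s"
  shows "s 0 = 0"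
proof -
  have "s (0 *\<^sub>R 0) = \<bar>0\<bar> * s 0"
    using assms unfolding is_seminorm_def by blast
  then show ?thesis
    by simp
qed

lemma seminorm_minus:
  assumes "is_seminorm s"
  shows "s (- x) = s x"
proof -
  have "s ((- 1) *\<^sub>R x) = \<bar>- 1\<bar> * s x"
    using assms unfolding is_seminorm_def by blast
  then show ?thesis
    by simp
qed

lemma seminorm_commute:
  assumes "is_seminorm s"
  shows "s (x - y) = s (y - x)"
  using seminorm_minus[OF assms, of "x - y"] by simp

lemma seminorm_triangle_diff:
  assumes "is_seminorm s"
  shows "s (x - z) \<le> s (x - y) + s (y - z)"
proof -
  have "s ((x - y) + (y - z)) \<le> s (x - y) + s (y - z)"
    using assms unfolding is_seminorm_def by blast
  then show ?thesis
    by simp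
qed

lemma seminorm_nonneg:
  assumes "is_seminorm s"
  shows "0 \<le> s x"
proof -
  have "s (0 - 0) \<le> s (0 - x) + s (x - 0)"
    by (rule seminorm_triangle_diff[OF assms])
  then show ?thesis
    by (simp add: seminorm_zero[OF assms] seminorm_minus[OF assms])
qed

lemma separates_pointsD:
  assumes "separates_points S" "\<forall>s\<in>S. s (x - y) = 0"
  shows "x = y"
  using assms unfolding separates_points_def by blast

lemma topspace_seminorm_topology [simp]: "topspace (seminorm_topology S) = UNIV"
proof -
  have "{z. \<forall>s\<in>{}. s (0 - z) < (1::real)} \<in>
      {{z. \<forall>s\<in>F. s (x - z) < \<delta>} | x F \<delta>. finite F \<and> F \<subseteq> S \<and> \<delta> > 0}"
    by (intro CollectI exI[of _ 0] exI[of _ "{}"] exI[of _ "1::real"]) simp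
  then show ?thesis
    unfolding seminorm_topology_def by auto
qed

lemma openin_seminorm_ball:
  assumes "s \<in> S" "\<delta> > 0"
  shows "openin (seminorm_topology S) {z. s (x - z) < \<delta>}"
proof -
  have "{z. s (x - z) < \<delta>} = {z. \<forall>t\<in>{s}. t (x - z) < \<delta>}"
    by auto
  also have "openin (seminorm_topology S) \<dots>"
    unfolding seminorm_topology_def by (rule topology_generated_by_Basis) (use assms in blast)
  finally show ?thesis .
qed

lemma compactin_sequence_cluster_point:
  assumes "compactin X Y" "range xs \<subseteq> Y"
  shows "\<exists>p\<in>Y. \<forall>U. openin X U \<longrightarrow> p \<in> U \<longrightarrow> (\<exists>\<^sub>F n in sequentially. xs n \<in> U)"
proof (rule ccontr)
  assume "\<not> ?thesis"
  then have "\<forall>p\<in>Y. \<exists>U. openin X U \<and> p \<in> U \<and> (\<forall>\<^sub>F n in sequentially. xs n \<notin> U)"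
    by (simp add: not_frequently)
  then obtain U where U: "\<And>p. p \<in> Y \<Longrightarrow> openin X (U p) \<and> p \<in> U p \<and> (\<forall>\<^sub>F n in sequentially. xs n \<notin> U p)"
    by metis
  then have "(\<forall>V\<in>U ` Y. openin X V) \<and> Y \<subseteq> \<Union>(U ` Y)"
    by blast
  then obtain \<F> where "finite \<F>" "\<F> \<subseteq> U ` Y" "Y \<subseteq> \<Union>\<F>"
    using assms(1) unfolding compactin_def by meson
  then obtain P where P: "P \<subseteq> Y" "finite P" "Y \<subseteq> (\<Union>p\<in>P. U p)"
    by (metis finite_subset_image)
  have "\<forall>\<^sub>F n in sequentially. \<forall>p\<in>P. xs n \<notin> U p"
    using P(2) by (rule eventually_ball_finite) (use P(1) U in blast)
  then have "\<forall>\<^sub>F n in sequentially. xs n \<notin> Y"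
    by (rule eventually_mono) (use P(3) in blast)
  then show False
    using assms(2) by (auto simp: eventually_sequentially)
qed

lemma continuous_map_seminorm_nbhd:
  assumes f: "continuous_map (subtopology (seminorm_topology S) Y) (subtopology (seminorm_topology S) Y) f"
    and "is_seminorm s" "s \<in> S" "e > 0" "p \<in> Y"
  obtains V where "openin (seminorm_topology S) V" "p \<in> V" "\<And>z. z \<in> V \<inter> Y \<Longrightarrow> s (f p - f z) < e"
proof -
  let ?T = "seminorm_topology S"
  have "openin (subtopology ?T Y) (Y \<inter> {z. s (f p - z) < e})"
    using openin_seminorm_ball[OF assms(3,4)] by (simp add: openin_subtopology_Int2 inf_commute)
  then have "openin (subtopology ?T Y) {z \<in> topspace (subtopology ?T Y). f z \<in> Y \<inter> {z. s (f p - z) < e}}"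
    by (rule openin_continuous_map_preimage[OF f])
  then obtain V where V: "openin ?T V" "{z \<in> Y. f z \<in> Y \<and> s (f p - f z) < e} = V \<inter> Y"
    unfolding openin_subtopology by auto
  have "f p \<in> Y"
    using continuous_map_image_subset_topspace[OF f] \<open>p \<in> Y\<close> by auto
  then have "p \<in> {z \<in> Y. f z \<in> Y \<and> s (f p - f z) < e}"
    using \<open>p \<in> Y\<close> \<open>e > 0\<close> by (simp add: seminorm_zero[OF \<open>is_seminorm s\<close>])
  then have "p \<in> V"
    unfolding V(2) by blast
  show thesis
  proof (rule that[OF V(1) \<open>p \<in> V\<close>])
    fix z
    assume "z \<in> V \<inter> Y"
    then show "s (f p - f z) < e"
      unfolding V(2)[symmetric] by blast
  qed
qed

lemma seminorm_image_at_orbit_cluster_point: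
  assumes f: "continuous_map (subtopology (seminorm_topology S) Y) (subtopology (seminorm_topology S) Y) f"
    and s: "is_seminorm s" "s \<in> S"
    and orbit: "range xs \<subseteq> Y" "\<And>n. xs (Suc n) = f (xs n)"
    and regular: "(\<lambda>n. s (xs n - xs (Suc n))) \<longlonglongrightarrow> 0"
    and "p \<in> Y"
    and cluster: "\<And>U. openin (seminorm_topology S) U \<Longrightarrow> p \<in> U \<Longrightarrow> \<exists>\<^sub>F n in sequentially. xs n \<in> U"
  shows "s (p - f p) = 0"
proof -
  have "s (p - f p) < 3 * e" if "e > 0" for e
  proof -
    obtain V where V: "openin (seminorm_topology S) V" "p \<in> V"
      and fV: "\<And>z. z \<in> V \<inter> Y \<Longrightarrow> s (f p - f z) < e"
      using continuous_map_seminorm_nbhd[OF f s \<open>e > 0\<close> \<open>p \<in> Y\<close>] by blast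
    have "openin (seminorm_topology S) (V \<inter> {z. s (p - z) < e})"
      using V(1) openin_seminorm_ball[OF s(2) \<open>e > 0\<close>] by (rule openin_Int)
    moreover have "p \<in> V \<inter> {z. s (p - z) < e}"
      using V(2) \<open>e > 0\<close> by (simp add: seminorm_zero[OF s(1)])
    ultimately have "\<exists>\<^sub>F n in sequentially. xs n \<in> V \<inter> {z. s (p - z) < e}"
      by (rule cluster)
    moreover have "\<forall>\<^sub>F n in sequentially. s (xs n - xs (Suc n)) < e"
      using regular \<open>e > 0\<close> by (rule order_tendstoD)
    ultimately have "\<exists>\<^sub>F n in sequentially. xs n \<in> V \<inter> {z. s (p - z) < e} \<and> s (xs n - xs (Suc n)) < e"
      by (rule frequently_eventually_frequently)
    then obtain n where n: "xs n \<in> V" "s (p - xs n) < e" "s (xs n - xs (Suc n)) < e"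
      by (auto elim: frequentlyE)
    have "s (f p - xs (Suc n)) < e"
      using fV[of "xs n"] n(1) orbit by auto
    then have "s (xs (Suc n) - f p) < e"
      using seminorm_commute[OF s(1), of "xs (Suc n)" "f p"] by simp
    moreover have "s (p - f p) \<le> s (p - xs n) + s (xs n - xs (Suc n)) + s (xs (Suc n) - f p)"
      using seminorm_triangle_diff[OF s(1), of p "f p" "xs n"]
        seminorm_triangle_diff[OF s(1), of "xs n" "f p" "xs (Suc n)"] by linarith
    ultimately show ?thesis
      using n(2,3) by linarith
  qed
  from this[of "s (p - f p) / 3"] have "\<not> s (p - f p) > 0"
    by auto
  then show ?thesis
    using seminorm_nonneg[OF s(1), of "p - f p"] by linarith
qed

lemma orbit_cluster_point_fixed:
  assumes f: "continuous_map (subtopology (seminorm_topology S) Y) (subtopology (seminorm_topology S) Y) f"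
    and S: "\<forall>s\<in>S. is_seminorm s" "separates_points S"
    and orbit: "range xs \<subseteq> Y" "\<And>n. xs (Suc n) = f (xs n)"
    and regular: "\<forall>s\<in>S. (\<lambda>n. s (xs n - xs (Suc n))) \<longlonglongrightarrow> 0"
    and "p \<in> Y"
    and cluster: "\<And>U. openin (seminorm_topology S) U \<Longrightarrow> p \<in> U \<Longrightarrow> \<exists>\<^sub>F n in sequentially. xs n \<in> U"
  shows "f p = p"
proof (rule sym, rule separates_pointsD[OF S(2)], intro ballI)
  fix s
  assume "s \<in> S"
  with S(1) regular show "s (p - f p) = 0"
    using seminorm_image_at_orbit_cluster_point[OF f _ _ orbit _ \<open>p \<in> Y\<close> cluster] by blast
qed

lemma fixed_points_eq_if_orbits_approach:
  assumes "separates_points S" "f x = x" "f y = y"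
    and "\<forall>s\<in>S. (\<lambda>n. s ((f ^^ n) x - (f ^^ n) y)) \<longlonglongrightarrow> 0"
  shows "x = y"
proof (rule separates_pointsD[OF assms(1)], intro ballI)
  fix s
  assume "s \<in> S"
  have "(f ^^ n) x = x" "(f ^^ n) y = y" for n
    by (induction n) (simp_all add: assms(2,3))
  then show "s (x - y) = 0"
    using assms(4) \<open>s \<in> S\<close> by (simp add: LIMSEQ_const_iff)
qed

theorem theorem9:
  fixes S :: "('a::real_vector \<Rightarrow> real) set"
    and Y :: "'a set"
    and f :: "'a \<Rightarrow> 'a"
  assumes "\<forall>s\<in>S. is_seminorm s"
    and "separates_points S"
    and "compactin (seminorm_topology S) Y"
    and "Y \<noteq> {}"
    and "continuous_map (subtopology (seminorm_topology S) Y) (subtopology (seminorm_topology S) Y) f"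
    and "\<forall>s\<in>S. \<forall>x\<in>Y. \<forall>y\<in>Y. (\<lambda>n. s ((f ^^ n) x - (f ^^ n) y)) \<longlonglongrightarrow> 0"
  shows "\<exists>!x. x \<in> Y \<and> f x = x"
proof -
  obtain x0 where "x0 \<in> Y"
    using assms(4) by blast
  have maps_to: "f y \<in> Y" if "y \<in> Y" for y
    using continuous_map_image_subset_topspace[OF assms(5)] that by auto
  define xs where "xs n = (f ^^ n) x0" for n
  have "xs n \<in> Y" for n
    by (induction n) (simp_all add: xs_def \<open>x0 \<in> Y\<close> maps_to)
  then have orbit: "range xs \<subseteq> Y" "xs (Suc n) = f (xs n)" for n
    by (auto simp: xs_def)
  obtain p where "p \<in> Y"
    and cluster: "\<And>U. openin (seminorm_topology S) U \<Longrightarrow> p \<in> U \<Longrightarrow> \<exists>\<^sub>F n in sequentially. xs n \<in> U"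
    using compactin_sequence_cluster_point[OF assms(3) orbit(1)] by blast
  have "\<forall>s\<in>S. (\<lambda>n. s (xs n - xs (Suc n))) \<longlonglongrightarrow> 0"
    using assms(6) \<open>x0 \<in> Y\<close> maps_to[OF \<open>x0 \<in> Y\<close>] by (simp add: xs_def funpow_swap1)
  then have "f p = p"
    using orbit_cluster_point_fixed[OF assms(5,1,2) orbit _ \<open>p \<in> Y\<close> cluster] by blast
  moreover have "x = y" if "x \<in> Y" "f x = x" "y \<in> Y" "f y = y" for x y
    using assms(6) that(1,3) by (intro fixed_points_eq_if_orbits_approach[OF assms(2) that(2,4)]) blast
  ultimately show ?thesis
    using \<open>p \<in> Y\<close> by blast
qed

end
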